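(* For all positive integers $n$ and $r$, \[ k(K_{rn}^{(r+1)};r)\leq k(n,r)\leq k(K_{rn}^{(r+1)};r)+5. \]
   Context: For a hypergraph $H=(V,E)$ (all hyperedges of size at least 2) and $r\in\mathbb N$, a colouring of the $r$-subsets of $V$ makes a hyperedge $e$ with $|e|\geq r+1$ monochromatic if all $r$-subsets of $e$ receive the same colour; $k(H;r)$ is the least $k$ for which there is a colouring of the $r$-subsets of $V$ with $k$ colours with no monochromatic hyperedge of size $\geq r+1$. $\chi(H)$ is the vertex chromatic number (least number of colours in a vertex colouring with no monochromatic hyperedge). $k(n,r)=\max\{k(H;r):\chi(H)=n\}$. $K_m^{(r+1)}$ is the complete $(r+1)$-uniform hypergraph on $m$ vertices. *)

theory Defs
  imports Main "HOL-Library.Extended_Nat"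
begin

definition hypergraph :: "'a set \<Rightarrow> 'a set set \<Rightarrow> bool" where
  "hypergraph V E \<longleftrightarrow> finite V \<and> (\<forall>e\<in>E. e \<subseteq> V \<and> card e \<ge> 2)"

definition proper_vertex_colouring :: "'a set \<Rightarrow> 'a set set \<Rightarrow> nat \<Rightarrow> ('a \<Rightarrow> nat) \<Rightarrow> bool" where
  "proper_vertex_colouring V E k c \<longleftrightarrow>
     (\<forall>v\<in>V. c v < k) \<and> (\<forall>e\<in>E. \<not> (\<forall>u\<in>e. \<forall>w\<in>e. c u = c w))"

definition chromatic_number :: "'a set \<Rightarrow> 'a set set \<Rightarrow> nat" where
  "chromatic_number V E = (LEAST k. \<exists>c. proper_vertex_colouring V E k c)"

definition good_subset_colouring ::
  "'a set \<Rightarrow> 'a set set \<Rightarrow> nat \<Rightarrow> nat \<Rightarrow> ('a set \<Rightarrow> nat) \<Rightarrow> bool" where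
  "good_subset_colouring V E r k f \<longleftrightarrow>
     (\<forall>s. s \<subseteq> V \<and> card s = r \<longrightarrow> f s < k) \<and>
     (\<forall>e\<in>E. card e \<ge> r + 1 \<longrightarrow>
        \<not> (\<forall>s t. s \<subseteq> e \<and> card s = r \<and> t \<subseteq> e \<and> card t = r \<longrightarrow> f s = f t))"

definition k_H :: "'a set \<Rightarrow> 'a set set \<Rightarrow> nat \<Rightarrow> nat" where
  "k_H V E r = (LEAST k. \<exists>f. good_subset_colouring V E r k f)"

text \<open>k(n,r) = max { k(H;r) : chi(H) = n }, taken over all finite hypergraphs
  (every finite hypergraph is isomorphic to one with vertices in nat).
  The maximum is rendered as a supremum in enat (it is a maximum whenever finite).\<close>
definition k_nr :: "nat \<Rightarrow> nat \<Rightarrow> enat" where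
  "k_nr n r = Sup {enat (k_H V E r) | (V :: nat set) E.
                     hypergraph V E \<and> chromatic_number V E = n}"

definition complete_verts :: "nat \<Rightarrow> nat set" where
  "complete_verts m = {..<m}"

definition complete_edges :: "nat \<Rightarrow> nat \<Rightarrow> nat set set" where
  "complete_edges m s = {e. e \<subseteq> {..<m} \<and> card e = s}"

end

theory Submission
  imports Defs
begin

(* Let c be a proper vertex colouring of H with n colours and f an optimal colouring of the
  r-subsets of [rn] without monochromatic (r+1)-sets. Colour an r-subset s of V by f(c(s)) if c is
  injective on s, and otherwise by one of four new colours: with b the least colour repeated in s,
  p the number of vertices of s of colour below b and q the number of colour b, take q mod 2 if
  p = 0 and 2 + p mod 2 otherwise. If c takes at least r+1 colours on an edge e, then e contains an
  (r+1)-set on which c is injective and f distinguishes two of its r-subsets; if exactly r, a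
  rainbow r-subset gets an old colour and a non-rainbow one a new colour; if between 2 and r-1,
  exchanging single vertices changes p or q by one and hence the new colour. So
  k(H;r) <= k(K_rn;r) + 4, while K_rn itself has chromatic number n. *)

definition nonmonochromatic :: "('a set \<Rightarrow> nat) \<Rightarrow> nat \<Rightarrow> 'a set \<Rightarrow> bool" where
  "nonmonochromatic f r e \<longleftrightarrow>
     (\<exists>s t. s \<subseteq> e \<and> card s = r \<and> t \<subseteq> e \<and> card t = r \<and> f s \<noteq> f t)"

lemma good_subset_colouring_iff:
  "good_subset_colouring V E r k f \<longleftrightarrow>
     (\<forall>s. s \<subseteq> V \<and> card s = r \<longrightarrow> f s < k) \<and>
     (\<forall>e\<in>E. r + 1 \<le> card e \<longrightarrow> nonmonochromatic f r e)"
  unfolding good_subset_colouring_def nonmonochromatic_def by blast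

lemma k_H_le:
  assumes "good_subset_colouring V E r k f"
  shows "k_H V E r \<le> k"
  unfolding k_H_def using assms by (intro Least_le) blast

lemma nonmonochromatic_if_inj_on:
  assumes "inj_on f {s. s \<subseteq> e \<and> card s = r}" and "r \<ge> 1" and "r + 1 \<le> card e"
  shows "nonmonochromatic f r e"
proof -
  obtain e' where e': "e' \<subseteq> e" "card e' = r + 1" "finite e'"
    using assms(3) by (rule obtain_subset_with_card_n)
  have "\<not> card e' \<le> Suc 0"
    using e'(2) assms(2) by simp
  then obtain x y where xy: "x \<in> e'" "y \<in> e'" "x \<noteq> y"
    unfolding card_le_Suc0_iff_eq[OF e'(3)] by blast
  have "e' - {x} \<noteq> e' - {y}"
    using xy by blast
  moreover have subsets: "e' - {x} \<in> {s. s \<subseteq> e \<and> card s = r}" "e' - {y} \<in> {s. s \<subseteq> e \<and> card s = r}"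
    using xy e' by auto
  ultimately have "f (e' - {x}) \<noteq> f (e' - {y})"
    by (simp add: inj_on_eq_iff[OF assms(1)])
  with subsets show ?thesis
    unfolding nonmonochromatic_def by blast
qed

lemma good_subset_colouring_k_H:
  assumes "finite V" and "\<forall>e\<in>E. e \<subseteq> V" and "r \<ge> 1"
  shows "\<exists>f. good_subset_colouring V E r (k_H V E r) f"
proof -
  have "finite {s. s \<subseteq> V \<and> card s = r}"
    using assms(1) by simp
  from finite_imp_inj_to_nat_seg[OF this] obtain f :: "'a set \<Rightarrow> nat" and k where
    f: "f ` {s. s \<subseteq> V \<and> card s = r} = {i. i < k}" "inj_on f {s. s \<subseteq> V \<and> card s = r}"
    by blast
  have "f s < k" if "s \<subseteq> V" "card s = r" for s
  proof -
    have "f s \<in> f ` {s. s \<subseteq> V \<and> card s = r}"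
      using that by simp
    then show ?thesis
      unfolding f(1) by simp
  qed
  moreover have "nonmonochromatic f r e" if "e \<in> E" "r + 1 \<le> card e" for e
  proof (rule nonmonochromatic_if_inj_on)
    show "inj_on f {s. s \<subseteq> e \<and> card s = r}"
      using f(2) by (rule inj_on_subset) (use that assms(2) in auto)
  qed (use that assms(3) in auto)
  ultimately have "good_subset_colouring V E r k f"
    unfolding good_subset_colouring_iff by blast
  then have "\<exists>k f. good_subset_colouring V E r k f"
    by blast
  then show ?thesis
    unfolding k_H_def by (rule LeastI_ex)
qed

lemma proper_vertex_colouring_chromatic_number:
  assumes "hypergraph V E"
  shows "\<exists>c. proper_vertex_colouring V E (chromatic_number V E) c"
proof -
  have "finite V"
    using assms unfolding hypergraph_def by blast
  from finite_imp_inj_to_nat_seg[OF this] obtain c :: "'a \<Rightarrow> nat" and k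
    where c: "c ` V = {i. i < k}" "inj_on c V"
    by blast
  have "\<not> (\<forall>u\<in>e. \<forall>w\<in>e. c u = c w)" if "e \<in> E" for e
  proof -
    have "e \<subseteq> V" "\<not> card e \<le> Suc 0"
      using that assms unfolding hypergraph_def by auto
    moreover have "finite e"
      using \<open>e \<subseteq> V\<close> \<open>finite V\<close> by (rule finite_subset)
    ultimately obtain u w where "u \<in> e" "w \<in> e" "u \<noteq> w" "u \<in> V" "w \<in> V"
      using card_le_Suc0_iff_eq by blast
    then show ?thesis
      using inj_onD[OF c(2)] by blast
  qed
  then have "proper_vertex_colouring V E k c"
    unfolding proper_vertex_colouring_def using c(1) by blast
  then have "\<exists>k c. proper_vertex_colouring V E k c"
    by blast
  then show ?thesis
    unfolding chromatic_number_def by (rule LeastI_ex)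
qed

lemma hypergraph_complete:
  assumes "r \<ge> 1"
  shows "hypergraph (complete_verts m) (complete_edges m (r + 1))"
  using assms unfolding hypergraph_def complete_verts_def complete_edges_def by auto

lemma proper_vertex_colouring_complete_div:
  assumes "r \<ge> 1"
  shows "proper_vertex_colouring (complete_verts (r * n)) (complete_edges (r * n) (r + 1)) n
           (\<lambda>v. v div r)"
  unfolding proper_vertex_colouring_def complete_verts_def complete_edges_def
proof (intro conjI ballI notI)
  fix v assume "v \<in> {..<r * n}"
  then show "v div r < n"
    by (simp add: less_mult_imp_div_less mult.commute)
next
  fix e assume e: "e \<in> {e. e \<subseteq> {..<r * n} \<and> card e = r + 1}"
    and same_block: "\<forall>u\<in>e. \<forall>w\<in>e. u div r = w div r"
  then obtain u where "u \<in> e"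
    by fastforce
  have "e \<subseteq> {u div r * r ..< u div r * r + r}"
  proof
    fix w assume "w \<in> e"
    then have "w = u div r * r + w mod r"
      using same_block \<open>u \<in> e\<close> by (metis div_mult_mod_eq)
    moreover have "w mod r < r"
      using assms by simp
    ultimately show "w \<in> {u div r * r ..< u div r * r + r}"
      unfolding atLeastLessThan_iff by linarith
  qed
  then have "card e \<le> card {u div r * r ..< u div r * r + r}"
    by (intro card_mono) simp_all
  then have "card e \<le> r"
    by simp
  then show False
    using e by simp
qed

lemma card_le_mult_if_proper_vertex_colouring_complete:
  assumes "proper_vertex_colouring (complete_verts m) (complete_edges m (r + 1)) k c"
  shows "m \<le> k * r"
proof -
  define C where "C j = {v\<in>{..<m}. c v = j}" for j
  have "card (C j) \<le> r" for j
  proof (rule ccontr)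
    assume "\<not> card (C j) \<le> r"
    then have "r + 1 \<le> card (C j)"
      by simp
    then obtain e where e: "e \<subseteq> C j" "card e = r + 1"
      by (meson obtain_subset_with_card_n)
    then have "e \<in> complete_edges m (r + 1)" "\<forall>u\<in>e. \<forall>w\<in>e. c u = c w"
      unfolding complete_edges_def C_def by auto
    then show False
      using assms unfolding proper_vertex_colouring_def by blast
  qed
  have cover: "{..<m} = (\<Union>j<k. C j)"
    using assms unfolding proper_vertex_colouring_def complete_verts_def C_def by auto
  have "m = card (\<Union>j<k. C j)"
    unfolding cover[symmetric] by simp
  also have "\<dots> \<le> (\<Sum>j<k. card (C j))"
    by (rule card_UN_le) simp
  also have "\<dots> \<le> k * r"
    using sum_mono[of "{..<k}" "\<lambda>j. card (C j)" "\<lambda>_. r"] \<open>\<And>j. card (C j) \<le> r\<close> by simp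
  finally show ?thesis .
qed

lemma chromatic_number_complete:
  assumes "r \<ge> 1"
  shows "chromatic_number (complete_verts (r * n)) (complete_edges (r * n) (r + 1)) = n"
  unfolding chromatic_number_def
proof (rule Least_equality)
  show "\<exists>c. proper_vertex_colouring (complete_verts (r * n)) (complete_edges (r * n) (r + 1)) n c"
    using proper_vertex_colouring_complete_div[OF assms] by blast
next
  fix k
  assume "\<exists>c. proper_vertex_colouring (complete_verts (r * n)) (complete_edges (r * n) (r + 1)) k c"
  then have "r * n \<le> k * r"
    using card_le_mult_if_proper_vertex_colouring_complete by blast
  then show "n \<le> k"
    using assms by (simp add: mult.commute)
qed

definition least_repeated_colour :: "('a \<Rightarrow> nat) \<Rightarrow> 'a set \<Rightarrow> nat" where
  "least_repeated_colour c s = (LEAST j. 2 \<le> card {v\<in>s. c v = j})"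

definition parity_pattern :: "nat \<Rightarrow> nat \<Rightarrow> nat" where
  "parity_pattern p q = (if p = 0 then q mod 2 else 2 + p mod 2)"

(* least_repeated_colour c s is an unspecified LEAST when c is injective on s; parity_colour is
  only ever applied to sets on which c is not injective. *)
definition parity_colour :: "('a \<Rightarrow> nat) \<Rightarrow> 'a set \<Rightarrow> nat" where
  "parity_colour c s =
     (let b = least_repeated_colour c s
      in parity_pattern (card {v\<in>s. c v < b}) (card {v\<in>s. c v = b}))"

lemma parity_pattern_Suc_neq: "parity_pattern p q \<noteq> parity_pattern (Suc p) q'"
  unfolding parity_pattern_def by presburger

lemma parity_pattern_0_Suc_neq: "parity_pattern 0 q \<noteq> parity_pattern 0 (Suc q)"
  unfolding parity_pattern_def by presburger

lemma parity_colour_less_4: "parity_colour c s < 4"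
  unfolding parity_colour_def parity_pattern_def Let_def by auto

lemma least_repeated_colourD:
  assumes "finite s" and "\<not> inj_on c s"
  shows "2 \<le> card {v\<in>s. c v = least_repeated_colour c s}"
proof -
  obtain u w where "u \<in> s" "w \<in> s" "u \<noteq> w" "c u = c w"
    using assms(2) unfolding inj_on_def by blast
  then have "card {u, w} \<le> card {v\<in>s. c v = c u}"
    using assms(1) by (intro card_mono) auto
  then have "2 \<le> card {v\<in>s. c v = c u}"
    using \<open>u \<noteq> w\<close> by simp
  then show ?thesis
    unfolding least_repeated_colour_def by (rule LeastI)
qed

lemma card_le_1_below_least_repeated_colour:
  assumes "j < least_repeated_colour c s"
  shows "card {v\<in>s. c v = j} \<le> 1"
  using not_less_Least[OF assms[unfolded least_repeated_colour_def]] by simp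

lemma two_le_parity_colour:
  assumes "finite s" and "u \<in> s" and "c u < least_repeated_colour c s"
  shows "2 \<le> parity_colour c s"
proof -
  have "card {v\<in>s. c v < least_repeated_colour c s} \<noteq> 0"
    using assms by auto
  then show ?thesis
    unfolding parity_colour_def parity_pattern_def Let_def by simp
qed

locale least_repeated =
  fixes c :: "'a \<Rightarrow> nat" and e :: "'a set" and b :: nat
  assumes finite_e: "finite e"
    and repeated_b: "2 \<le> card {v\<in>e. c v = b}"
    and unrepeated_below_b: "\<And>j. j < b \<Longrightarrow> card {v\<in>e. c v = j} \<le> 1"
begin

lemma least_repeated_colour_subset:
  assumes "s \<subseteq> e" and "2 \<le> card {v\<in>s. c v = b}"
  shows "least_repeated_colour c s = b"
  unfolding least_repeated_colour_def
proof (rule Least_equality)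
  fix j assume j: "2 \<le> card {v\<in>s. c v = j}"
  have "card {v\<in>s. c v = j} \<le> card {v\<in>e. c v = j}"
    using assms(1) finite_e by (intro card_mono) auto
  then show "b \<le> j"
    using j unrepeated_below_b[of j] by (cases "j < b") auto
qed fact

lemma parity_colour_subset:
  assumes "s \<subseteq> e" and "2 \<le> card {v\<in>s. c v = b}"
  shows "parity_colour c s = parity_pattern (card {v\<in>s. c v < b}) (card {v\<in>s. c v = b})"
  using least_repeated_colour_subset[OF assms] unfolding parity_colour_def by simp

lemma b_in_image: "b \<in> c ` e"
  using repeated_b by (cases "{v\<in>e. c v = b} = {}") auto

lemma inj_on_below: "inj_on c {v\<in>e. c v < b}"
proof (rule inj_onI)
  fix u w assume uw: "u \<in> {v\<in>e. c v < b}" "w \<in> {v\<in>e. c v < b}" "c u = c w"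
  then have "card {v\<in>e. c v = c u} \<le> Suc 0"
    using unrepeated_below_b by simp
  moreover have "u \<in> {v\<in>e. c v = c u}" "w \<in> {v\<in>e. c v = c u}"
    using uw by auto
  ultimately show "u = w"
    using finite_e card_le_Suc0_iff_eq[of "{v\<in>e. c v = c u}"] by auto
qed

lemma card_below_less: "card {v\<in>e. c v < b} < card (c ` e)"
proof -
  have "c ` {v\<in>e. c v < b} \<subseteq> c ` e" "b \<in> c ` e - c ` {v\<in>e. c v < b}"
    using b_in_image by auto
  then have "c ` {v\<in>e. c v < b} \<subset> c ` e"
    by blast
  then have "card (c ` {v\<in>e. c v < b}) < card (c ` e)"
    using finite_e by (intro psubset_card_mono) auto
  then show ?thesis
    using card_image[OF inj_on_below] by simp
qed

(* Dropping one vertex of colour below b changes p by one and keeps b. *)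
lemma nonmonochromatic_parity_colour_if_below:
  assumes "x \<in> e" and "c x < b" and "card (c ` e) < r" and "r < card e"
  shows "nonmonochromatic (parity_colour c) r e"
proof -
  define P where "P = {v\<in>e. c v < b}"
  obtain B where B: "B \<subseteq> {v\<in>e. c v = b}" "card B = 2" "finite B"
    using repeated_b by (rule obtain_subset_with_card_n)
  have P: "finite P" "x \<in> P" "P \<inter> B = {}"
    using assms(1,2) finite_e B(1) unfolding P_def by auto
  have "card P + 2 \<le> r"
    using card_below_less assms(3) unfolding P_def by linarith
  have "card (P \<union> B) = card P + 2"
    using P B by (simp add: card_Un_disjoint)
  then have "card (P \<union> B) \<le> r" "r \<le> card e"
    using \<open>card P + 2 \<le> r\<close> assms(4) by simp_all
  moreover have "P \<union> B \<subseteq> e"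
    using B(1) unfolding P_def by auto
  ultimately obtain s2 where s2: "P \<union> B \<subseteq> s2" "s2 \<subseteq> e" "card s2 = r"
    using exists_subset_between finite_e by metis
  have "card ((P - {x}) \<union> B) = card (P - {x}) + card B"
    by (rule card_Un_disjoint) (use P B in auto)
  moreover have "card P \<noteq> 0"
    using P by auto
  ultimately have "card ((P - {x}) \<union> B) \<le> r"
    using P B(2) \<open>card P + 2 \<le> r\<close> by simp
  moreover have "r \<le> card (e - {x})"
    using assms(1,4) finite_e by simp
  moreover have "(P - {x}) \<union> B \<subseteq> e - {x}"
    using B(1) assms(2) unfolding P_def by auto
  ultimately obtain s1 where s1: "(P - {x}) \<union> B \<subseteq> s1" "s1 \<subseteq> e - {x}" "card s1 = r"
    using exists_subset_between finite_e by (metis finite_Diff)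
  have "{v\<in>s1. c v < b} = P - {x}" "{v\<in>s2. c v < b} = P"
    using s1 s2 unfolding P_def by auto
  moreover have "card P = Suc (card (P - {x}))"
    using card_Suc_Diff1[OF P(1,2)] by simp
  moreover have "s1 \<subseteq> e"
    using s1(2) by blast
  moreover have "2 \<le> card {v\<in>s. c v = b}" if "B \<subseteq> s" "s \<subseteq> e" for s
    using card_mono[OF finite_subset[OF _ finite_e], of "{v\<in>s. c v = b}" B] that B by auto
  ultimately have "parity_colour c s1 \<noteq> parity_colour c s2"
    using s1(1) s2 by (simp add: parity_colour_subset parity_pattern_Suc_neq)
  then show ?thesis
    unfolding nonmonochromatic_def using s1 s2 by blast
qed

lemma exists_subset_with_b_part:
  assumes "\<forall>v\<in>e. b \<le> c v" and "X \<subseteq> {v\<in>e. c v = b}"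
    and "card X \<le> r" and "r \<le> card X + card {v\<in>e. b < c v}"
  shows "\<exists>s. s \<subseteq> e \<and> card s = r \<and> {v\<in>s. c v = b} = X"
proof -
  let ?R = "{v\<in>e. b < c v}"
  have "finite X"
    using assms(2) finite_e by (simp add: finite_subset)
  moreover have "finite ?R"
    using finite_e by simp
  moreover have "X \<inter> ?R = {}"
    using assms(2) by auto
  ultimately have "card (X \<union> ?R) = card X + card ?R"
    by (simp add: card_Un_disjoint)
  then obtain s where s: "X \<subseteq> s" "s \<subseteq> X \<union> ?R" "card s = r"
    using exists_subset_between[of X r "X \<union> ?R"] assms(3,4) \<open>finite X\<close> \<open>finite ?R\<close> by auto
  then have "{v\<in>s. c v = b} = X" "s \<subseteq> e"
    using assms(2) by auto
  with s show ?thesis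
    by blast
qed

lemma card_eq_b_part_plus_above:
  assumes "\<forall>v\<in>e. b \<le> c v"
  shows "card e = card {v\<in>e. c v = b} + card {v\<in>e. b < c v}"
proof -
  have "e = {v\<in>e. c v = b} \<union> {v\<in>e. b < c v}"
    using assms by force
  then have "card e = card ({v\<in>e. c v = b} \<union> {v\<in>e. b < c v})"
    by simp
  also have "\<dots> = card {v\<in>e. c v = b} + card {v\<in>e. b < c v}"
    using finite_e by (intro card_Un_disjoint) auto
  finally show ?thesis .
qed

(* The least repeated colour of s then lies above b, so the vertex of colour b counts towards p. *)
lemma two_le_parity_colour_if_unique_b:
  assumes "\<forall>v\<in>e. b \<le> c v" and "s \<subseteq> e" and "card (c ` e) < card s"
    and "card {v\<in>s. c v = b} = 1"
  shows "2 \<le> parity_colour c s"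
proof -
  have "finite s"
    using assms(2) finite_e by (rule finite_subset)
  have "card (c ` s) \<le> card (c ` e)"
    using assms(2) finite_e by (simp add: card_mono image_mono)
  then have "\<not> inj_on c s"
    using assms(3) by (intro pigeonhole) linarith
  then have repeated: "2 \<le> card {v\<in>s. c v = least_repeated_colour c s}"
    by (rule least_repeated_colourD[OF \<open>finite s\<close>])
  then obtain y where "y \<in> s" "c y = least_repeated_colour c s"
    by (cases "{v\<in>s. c v = least_repeated_colour c s} = {}") auto
  moreover have "least_repeated_colour c s \<noteq> b"
    using repeated assms(4) by auto
  ultimately have "b < least_repeated_colour c s"
    using assms(1,2) by force
  moreover obtain u where "u \<in> s" "c u = b"
    using assms(4) by (cases "{v\<in>s. c v = b} = {}") auto
  ultimately show ?thesis
    using two_le_parity_colour[OF \<open>finite s\<close>] by blast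
qed

lemma nonmonochromatic_parity_colour_if_few_above:
  assumes "\<forall>v\<in>e. b \<le> c v" and "card (c ` e) < r" and "r \<le> card {v\<in>e. b < c v} + 1"
  shows "nonmonochromatic (parity_colour c) r e"
proof -
  have "0 < card (c ` e)"
    using b_in_image finite_e by (auto simp: card_gt_0_iff)
  then have "2 \<le> r"
    using assms(2) by linarith
  have "1 \<le> card {v\<in>e. c v = b}"
    using repeated_b by simp
  then obtain X1 where X1: "X1 \<subseteq> {v\<in>e. c v = b}" "card X1 = 1"
    by (meson obtain_subset_with_card_n)
  obtain X2 where X2: "X2 \<subseteq> {v\<in>e. c v = b}" "card X2 = 2"
    using repeated_b by (meson obtain_subset_with_card_n)
  obtain s1 where s1: "s1 \<subseteq> e" "card s1 = r" "{v\<in>s1. c v = b} = X1"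
    using exists_subset_with_b_part[OF assms(1) X1(1), of r] X1(2) assms(3) \<open>2 \<le> r\<close> by auto
  obtain s2 where s2: "s2 \<subseteq> e" "card s2 = r" "{v\<in>s2. c v = b} = X2"
    using exists_subset_with_b_part[OF assms(1) X2(1), of r] X2(2) assms(3) \<open>2 \<le> r\<close> by auto
  have "{v\<in>s2. c v < b} = {}"
    using s2(1) assms(1) by fastforce
  then have "card {v\<in>s2. c v < b} = 0"
    by (simp only: card.empty)
  then have "parity_colour c s2 = 0"
    using parity_colour_subset[OF s2(1)] s2(3) X2(2) by (simp add: parity_pattern_def)
  have "2 \<le> parity_colour c s1"
    using two_le_parity_colour_if_unique_b[OF assms(1) s1(1)] s1(2,3) X1(2) assms(2) by simp
  then have "parity_colour c s1 \<noteq> parity_colour c s2"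
    using \<open>parity_colour c s2 = 0\<close> by simp
  then show ?thesis
    unfolding nonmonochromatic_def using s1 s2 by blast
qed

lemma nonmonochromatic_parity_colour_if_many_above:
  assumes "\<forall>v\<in>e. b \<le> c v" and "2 \<le> card (c ` e)"
    and "card {v\<in>e. b < c v} + 1 < r" and "r < card e"
  shows "nonmonochromatic (parity_colour c) r e"
proof -
  define j where "j = r - card {v\<in>e. b < c v}"
  have "c ` e \<noteq> {b}"
  proof
    assume "c ` e = {b}"
    then show False
      using assms(2) by simp
  qed
  then have "{v\<in>e. b < c v} \<noteq> {}"
    using assms(1) b_in_image by fastforce
  then have "card {v\<in>e. b < c v} \<noteq> 0"
    using finite_e by simp
  then have j: "2 \<le> j" "Suc j \<le> card {v\<in>e. c v = b}" "Suc j \<le> r"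
    using assms(3,4) card_eq_b_part_plus_above[OF assms(1)] unfolding j_def by linarith+
  obtain X1 where X1: "X1 \<subseteq> {v\<in>e. c v = b}" "card X1 = j"
    using j(2) by (meson Suc_leD obtain_subset_with_card_n)
  obtain X2 where X2: "X2 \<subseteq> {v\<in>e. c v = b}" "card X2 = Suc j"
    using j(2) by (meson obtain_subset_with_card_n)
  obtain s1 where s1: "s1 \<subseteq> e" "card s1 = r" "{v\<in>s1. c v = b} = X1"
    using exists_subset_with_b_part[OF assms(1) X1(1), of r] X1(2) j unfolding j_def by auto
  obtain s2 where s2: "s2 \<subseteq> e" "card s2 = r" "{v\<in>s2. c v = b} = X2"
    using exists_subset_with_b_part[OF assms(1) X2(1), of r] X2(2) j unfolding j_def by auto
  have "{v\<in>s1. c v < b} = {}" "{v\<in>s2. c v < b} = {}"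
    using s1(1) s2(1) assms(1) by fastforce+
  then have "card {v\<in>s1. c v < b} = 0" "card {v\<in>s2. c v < b} = 0"
    by (simp_all only: card.empty)
  then have "parity_colour c s1 \<noteq> parity_colour c s2"
    using parity_colour_subset[OF s1(1)] parity_colour_subset[OF s2(1)] s1(3) s2(3) X1(2) X2(2) j(1)
    by (simp add: parity_pattern_0_Suc_neq)
  then show ?thesis
    unfolding nonmonochromatic_def using s1 s2 by blast
qed

end

lemma nonmonochromatic_parity_colour:
  assumes "finite e" and "2 \<le> card (c ` e)" and "card (c ` e) < r" and "r < card e"
  shows "nonmonochromatic (parity_colour c) r e"
proof -
  let ?b = "least_repeated_colour c e"
  have "\<not> inj_on c e"
    using assms(3,4) by (intro pigeonhole) linarith
  then interpret least_repeated c e ?b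
    using assms(1) least_repeated_colourD card_le_1_below_least_repeated_colour
    by unfold_locales blast+
  consider x where "x \<in> e" "c x < ?b" | "\<forall>v\<in>e. ?b \<le> c v"
    using not_le by blast
  then show ?thesis
  proof cases
    case 1
    then show ?thesis
      using nonmonochromatic_parity_colour_if_below assms(3,4) by blast
  next
    case 2
    then show ?thesis
      using nonmonochromatic_parity_colour_if_few_above nonmonochromatic_parity_colour_if_many_above
        assms(2-4) by (cases "r \<le> card {v\<in>e. ?b < c v} + 1") auto
  qed
qed

definition induced_colouring :: "(nat set \<Rightarrow> nat) \<Rightarrow> nat \<Rightarrow> ('a \<Rightarrow> nat) \<Rightarrow> 'a set \<Rightarrow> nat" where
  "induced_colouring f K c s = (if inj_on c s then f (c ` s) else K + parity_colour c s)"

lemma good_subset_colouring_complete_less: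
  assumes "good_subset_colouring (complete_verts m) (complete_edges m (r + 1)) r K f"
    and "s \<subseteq> {..<m}" and "card s = r"
  shows "f s < K"
  using assms unfolding good_subset_colouring_def complete_verts_def by blast

lemma good_subset_colouring_complete_nonmonochromatic:
  assumes "good_subset_colouring (complete_verts m) (complete_edges m (r + 1)) r K f"
    and "Y \<subseteq> {..<m}" and "card Y = r + 1"
  shows "nonmonochromatic f r Y"
  using assms unfolding good_subset_colouring_iff complete_edges_def by auto

lemma nonmonochromatic_induced_colouring_if_many_colours:
  assumes "good_subset_colouring (complete_verts m) (complete_edges m (r + 1)) r K f"
    and "c ` e \<subseteq> {..<m}" and "r + 1 \<le> card (c ` e)"
  shows "nonmonochromatic (induced_colouring f K c) r e"
proof -
  have lift: "\<exists>S'. S' \<subseteq> e \<and> card S' = r \<and> induced_colouring f K c S' = f S"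
    if "S \<subseteq> c ` e" and "card S = r" for S
  proof -
    have "\<exists>U\<subseteq>e. inj_on c U \<and> S = c ` U"
      using that(1) by (simp only: subset_image_inj)
    then obtain S' where S': "S' \<subseteq> e" "inj_on c S'" "S = c ` S'"
      by (elim exE conjE)
    then have "card S' = r"
      using card_image[OF S'(2)] that(2) by simp
    moreover have "induced_colouring f K c S' = f S"
      using S'(2,3) unfolding induced_colouring_def by simp
    ultimately show ?thesis
      using S'(1) by blast
  qed
  obtain Y where Y: "Y \<subseteq> c ` e" "card Y = r + 1"
    using assms(3) by (meson obtain_subset_with_card_n)
  have "Y \<subseteq> {..<m}"
    using Y(1) assms(2) by (rule subset_trans)
  then have "nonmonochromatic f r Y"
    by (rule good_subset_colouring_complete_nonmonochromatic[OF assms(1) _ Y(2)])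
  then obtain S T where ST: "S \<subseteq> Y" "card S = r" "T \<subseteq> Y" "card T = r" "f S \<noteq> f T"
    unfolding nonmonochromatic_def by blast
  have "S \<subseteq> c ` e" "T \<subseteq> c ` e"
    using ST(1,3) Y(1) by auto
  obtain S' where S': "S' \<subseteq> e" "card S' = r" "induced_colouring f K c S' = f S"
    using lift[OF \<open>S \<subseteq> c ` e\<close> ST(2)] by (elim exE conjE)
  obtain T' where T': "T' \<subseteq> e" "card T' = r" "induced_colouring f K c T' = f T"
    using lift[OF \<open>T \<subseteq> c ` e\<close> ST(4)] by (elim exE conjE)
  have "induced_colouring f K c S' \<noteq> induced_colouring f K c T'"
    using S'(3) T'(3) ST(5) by simp
  with S'(1,2) T'(1,2) show ?thesis
    unfolding nonmonochromatic_def by blast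
qed

lemma nonmonochromatic_induced_colouring_if_r_colours:
  assumes "good_subset_colouring (complete_verts m) (complete_edges m (r + 1)) r K f"
    and "finite e" and "c ` e \<subseteq> {..<m}" and "card (c ` e) = r" and "2 \<le> r" and "r < card e"
  shows "nonmonochromatic (induced_colouring f K c) r e"
proof -
  have "\<exists>U\<subseteq>e. inj_on c U \<and> c ` e = c ` U"
    by (simp only: subset_image_inj[symmetric] subset_refl)
  then obtain X where X: "X \<subseteq> e" "inj_on c X" "c ` X = c ` e"
    by (elim exE conjE) (rule that, simp_all)
  have "card X = r"
    using X assms(4) card_image by fastforce
  then obtain z where z: "z \<in> e" "z \<notin> X"
    using assms(6) X(1) by (metis less_irrefl subsetI subset_antisym)
  then obtain x where x: "x \<in> X" "c x = c z"
    using X(3) by (metis imageE imageI)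
  have "card (X - {x}) \<noteq> 0"
    using \<open>card X = r\<close> assms(5) x(1) by simp
  then obtain w where w: "w \<in> X" "w \<noteq> x"
    by (metis card.empty DiffE ex_in_conv singletonI)
  define s where "s = insert z (X - {w})"
  have "finite X"
    using X(1) assms(2) by (rule finite_subset)
  have "s \<subseteq> e"
    using X(1) z(1) unfolding s_def by blast
  moreover have "card s = r"
    using z(2) w(1) \<open>finite X\<close> \<open>card X = r\<close> assms(5) unfolding s_def by simp
  moreover have "\<not> inj_on c s"
  proof
    assume "inj_on c s"
    moreover have "x \<in> s" "z \<in> s"
      using x(1) w(2) unfolding s_def by auto
    ultimately show False
      using x(2) z(2) x(1) inj_onD by metis
  qed
  moreover have "f (c ` X) < K"
    using assms(1,3) X(3) \<open>card X = r\<close> card_image[OF X(2)]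
    by (intro good_subset_colouring_complete_less) auto
  ultimately have "induced_colouring f K c X \<noteq> induced_colouring f K c s"
    using X(2) unfolding induced_colouring_def by simp
  then show ?thesis
    unfolding nonmonochromatic_def using X(1) \<open>card X = r\<close> \<open>s \<subseteq> e\<close> \<open>card s = r\<close> by blast
qed

lemma nonmonochromatic_induced_colouring_if_few_colours:
  assumes "finite e" and "2 \<le> card (c ` e)" and "card (c ` e) < r" and "r < card e"
  shows "nonmonochromatic (induced_colouring f K c) r e"
proof -
  obtain s t where st: "s \<subseteq> e" "card s = r" "t \<subseteq> e" "card t = r"
    "parity_colour c s \<noteq> parity_colour c t"
    using nonmonochromatic_parity_colour[OF assms] unfolding nonmonochromatic_def by blast
  have "\<not> inj_on c u" if "u \<subseteq> e" "card u = r" for u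
  proof (rule pigeonhole)
    have "card (c ` u) \<le> card (c ` e)"
      using that(1) assms(1) by (simp add: card_mono image_mono)
    then show "card (c ` u) < card u"
      using that(2) assms(3) by linarith
  qed
  with st have "induced_colouring f K c s \<noteq> induced_colouring f K c t"
    unfolding induced_colouring_def by simp
  with st show ?thesis
    unfolding nonmonochromatic_def by blast
qed

lemma nonmonochromatic_induced_colouring:
  assumes "good_subset_colouring (complete_verts m) (complete_edges m (r + 1)) r K f"
    and "finite e" and "c ` e \<subseteq> {..<m}" and "2 \<le> card (c ` e)" and "r + 1 \<le> card e"
  shows "nonmonochromatic (induced_colouring f K c) r e"
proof -
  consider "r + 1 \<le> card (c ` e)" | "card (c ` e) = r" | "card (c ` e) < r"
    by linarith
  then show ?thesis
  proof cases
    case 1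
    then show ?thesis
      using nonmonochromatic_induced_colouring_if_many_colours[OF assms(1,3)] by blast
  next
    case 2
    then show ?thesis
      using nonmonochromatic_induced_colouring_if_r_colours[OF assms(1-3)] assms(4,5) by simp
  next
    case 3
    then show ?thesis
      using nonmonochromatic_induced_colouring_if_few_colours[OF assms(2,4)] assms(5) by simp
  qed
qed

lemma good_subset_colouring_induced_colouring:
  assumes "hypergraph V E" and "proper_vertex_colouring V E k c" and "k \<le> m"
    and "good_subset_colouring (complete_verts m) (complete_edges m (r + 1)) r K f"
  shows "good_subset_colouring V E r (K + 4) (induced_colouring f K c)"
proof -
  have image_less: "c ` s \<subseteq> {..<m}" if "s \<subseteq> V" for s
    using that assms(2,3) unfolding proper_vertex_colouring_def by fastforce
  show ?thesis
    unfolding good_subset_colouring_iff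
  proof (intro conjI allI impI ballI)
    fix s assume s: "s \<subseteq> V \<and> card s = r"
    show "induced_colouring f K c s < K + 4"
    proof (cases "inj_on c s")
      case True
      then have "f (c ` s) < K"
        using s image_less card_image by (intro good_subset_colouring_complete_less[OF assms(4)]) auto
      with True show ?thesis
        unfolding induced_colouring_def by simp
    qed (simp add: induced_colouring_def parity_colour_less_4)
  next
    fix e assume "e \<in> E" and "r + 1 \<le> card e"
    have "finite e" "e \<subseteq> V"
      using assms(1) \<open>e \<in> E\<close> unfolding hypergraph_def by (auto intro: finite_subset)
    obtain u w where "u \<in> e" "w \<in> e" "c u \<noteq> c w"
      using assms(2) \<open>e \<in> E\<close> unfolding proper_vertex_colouring_def by blast
    then have "card {c u, c w} \<le> card (c ` e)"
      using \<open>finite e\<close> by (intro card_mono) auto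
    then have "2 \<le> card (c ` e)"
      using \<open>c u \<noteq> c w\<close> by simp
    then show "nonmonochromatic (induced_colouring f K c) r e"
      using nonmonochromatic_induced_colouring[OF assms(4) \<open>finite e\<close> image_less[OF \<open>e \<subseteq> V\<close>]]
        \<open>r + 1 \<le> card e\<close> by blast
  qed
qed

lemma k_H_le_complete_plus_4:
  assumes "hypergraph V E" and "proper_vertex_colouring V E k c" and "k \<le> m" and "r \<ge> 1"
  shows "k_H V E r \<le> k_H (complete_verts m) (complete_edges m (r + 1)) r + 4"
proof -
  let ?K = "k_H (complete_verts m) (complete_edges m (r + 1)) r"
  obtain f where "good_subset_colouring (complete_verts m) (complete_edges m (r + 1)) r ?K f"
    using good_subset_colouring_k_H[of "complete_verts m" "complete_edges m (r + 1)"] assms(4)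
    unfolding complete_verts_def complete_edges_def by auto
  then show ?thesis
    using k_H_le good_subset_colouring_induced_colouring assms(1-3) by blast
qed

theorem theorem4p2:
  fixes n r :: nat
  assumes "n \<ge> 1" and "r \<ge> 1"
  shows "enat (k_H (complete_verts (r * n)) (complete_edges (r * n) (r + 1)) r) \<le> k_nr n r
       \<and> k_nr n r \<le> enat (k_H (complete_verts (r * n)) (complete_edges (r * n) (r + 1)) r) + 5"
proof
  let ?K = "k_H (complete_verts (r * n)) (complete_edges (r * n) (r + 1)) r"
  show "enat ?K \<le> k_nr n r"
    unfolding k_nr_def
    using hypergraph_complete[OF assms(2)] chromatic_number_complete[OF assms(2)]
    by (intro Sup_upper) blast
  show "k_nr n r \<le> enat ?K + 5"
    unfolding k_nr_def
  proof (rule Sup_least)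
    fix x assume "x \<in> {enat (k_H V E r) | (V :: nat set) E.
                     hypergraph V E \<and> chromatic_number V E = n}"
    then obtain V :: "nat set" and E
      where VE: "x = enat (k_H V E r)" "hypergraph V E" "chromatic_number V E = n"
      by blast
    obtain c where "proper_vertex_colouring V E n c"
      using proper_vertex_colouring_chromatic_number[OF VE(2)] VE(3) by auto
    moreover have "n \<le> r * n"
      using assms(2) by simp
    ultimately have "k_H V E r \<le> ?K + 4"
      using k_H_le_complete_plus_4 VE(2) assms(2) by blast
    then show "x \<le> enat ?K + 5"
      using VE(1) by (simp add: numeral_eq_enat)
  qed
qed

end
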